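(* Let $\alpha>0$, $t_0>0$, and define the set-valued map $G:[t_0,+\infty)\times\mathcal H\times\mathcal H\rightrightarrows\mathcal H\times\mathcal H$ by $$G(t,u,v)=\{v\}\times\Big(-\tfrac{\alpha}{t}v-\arg\min_{g\in C(u)}\langle g,-v\rangle\Big).$$ Then: (i) for all $(t,u,v)$, the set $G(t,u,v)$ is convex and compact; (ii) $G$ is upper semicontinuous; (iii) if $\dim\mathcal H<+\infty$, the map $\phi:[t_0,+\infty)\times\mathcal H\times\mathcal H\to\mathcal H\times\mathcal H$, $(t,u,v)\mapsto\operatorname{proj}_{G(t,u,v)}(0)$, is locally compact; (iv) if the gradients $\nabla f_i$ are globally $L$-Lipschitz continuous, then there exists $c>0$ such that for all $(t,u,v)\in[t_0,+\infty)\times\mathcal H\times\mathcal H$, $$\sup_{\xi\in G(t,u,v)}\|\xi\|_{\mathcal H\times\mathcal H}\le c\big(1+\|(u,v)\|_{\mathcal H\times\mathcal H}\big),$$ where $\|(x,y)\|_{\mathcal H\times\mathcal H}=\sqrt{\|x\|^2+\|y\|^2}$.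
   Context: $\mathcal H$ is a real Hilbert space. $f_1,\dots,f_m:\mathcal H\to\mathbb R$ are convex and continuously differentiable. $C(u)=\operatorname{co}\{\nabla f_i(u):i=1,\dots,m\}$. For a closed convex $K$, $\operatorname{proj}_K(y)=\arg\min_{w\in K}\|w-y\|^2$. A set-valued map $G:\mathcal X\rightrightarrows\mathcal Y$ is upper semicontinuous at $x_0$ if for every open $N\supset G(x_0)$ there is a neighborhood $M$ of $x_0$ with $G(M)\subset N$; it is upper semicontinuous if this holds at every point. A single-valued map $\phi:\mathcal X\to\mathcal Y$ is locally compact if every point has a neighborhood that is mapped into a compact subset of $\mathcal Y$. *)

theory Defs
  imports "HOL-Analysis.Analysis"
begin

text \<open>C(u) = co { grad f_i (u) : i = 1..m }, gradients given by the functions df i.\<close>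
definition Cset :: "nat \<Rightarrow> (nat \<Rightarrow> 'a::real_inner \<Rightarrow> 'a) \<Rightarrow> 'a \<Rightarrow> 'a set" where
  "Cset m df u = convex hull ((\<lambda>i. df i u) ` {1..m})"

definition argmin_inner :: "'a::real_inner set \<Rightarrow> 'a \<Rightarrow> 'a set" where
  "argmin_inner K y = {g \<in> K. \<forall>g'\<in>K. inner g y \<le> inner g' y}"

definition Gmap :: "nat \<Rightarrow> (nat \<Rightarrow> 'a::real_inner \<Rightarrow> 'a) \<Rightarrow> real \<Rightarrow> real \<times> 'a \<times> 'a \<Rightarrow> ('a \<times> 'a) set" where
  "Gmap m df \<alpha> x = (case x of (t, u, v) \<Rightarrow>
     {(v, - ((\<alpha> / t) *\<^sub>R v) - g) | g. g \<in> argmin_inner (Cset m df u) (- v)})"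

definition proj :: "'a::real_normed_vector set \<Rightarrow> 'a \<Rightarrow> 'a" where
  "proj K y = (SOME w. w \<in> K \<and> (\<forall>w'\<in>K. (norm (w - y))\<^sup>2 \<le> (norm (w' - y))\<^sup>2))"

definition usc_on :: "'a::topological_space set \<Rightarrow> ('a \<Rightarrow> 'b::topological_space set) \<Rightarrow> bool" where
  "usc_on S G \<longleftrightarrow> (\<forall>x0\<in>S. \<forall>N. open N \<and> G x0 \<subseteq> N \<longrightarrow>
      (\<exists>M. open M \<and> x0 \<in> M \<and> (\<forall>y\<in>M \<inter> S. G y \<subseteq> N)))"

definition locally_compact_map :: "'a::topological_space set \<Rightarrow> ('a \<Rightarrow> 'b::topological_space) \<Rightarrow> bool" where
  "locally_compact_map S \<phi> \<longleftrightarrow> (\<forall>x\<in>S. \<exists>M K. open M \<and> x \<in> M \<and> compact K \<and> \<phi> ` (M \<inter> S) \<subseteq> K)"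

end

theory Submission
  imports Defs
begin

text \<open>\<open>C(u)\<close> is the convex hull of finitely many gradients, so the minimisers of
  \<open>\<langle>\<cdot>, -v\<rangle>\<close> over it form the convex hull of the minimising gradients, a nonempty compact
  convex set, and \<open>G(t, u, v)\<close> is its image under an affine map. Near \<open>(u\<^sub>0, v\<^sub>0)\<close> every
  strict inequality between the values \<open>\<langle>\<nabla>f\<^sub>i(u), -v\<rangle>\<close> persists, so gradients minimising at a
  nearby point are close to gradients minimising at \<open>(u\<^sub>0, v\<^sub>0)\<close>; since neighbourhoods of
  convex sets are convex this gives upper semicontinuity. The elements of \<open>G(t, u, v)\<close> have norm
  at most \<open>(1 + \<alpha>/t\<^sub>0)\<parallel>v\<parallel> + max\<^sub>i \<parallel>\<nabla>f\<^sub>i(u)\<parallel>\<close>, which yields local boundedness (hence local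
  compactness in finite dimension, where closed balls are compact) and, for Lipschitz
  gradients, linear growth.\<close>

lemma argmin_inner_subset: "argmin_inner K y \<subseteq> K"
  unfolding argmin_inner_def by auto

lemma argmin_inner_eq_Int_halfspaces:
  "argmin_inner K y = K \<inter> (\<Inter>g'\<in>K. {g. inner y g \<le> inner g' y})"
  unfolding argmin_inner_def by (auto simp: inner_commute)

lemma convex_argmin_inner: "convex K \<Longrightarrow> convex (argmin_inner K y)"
  unfolding argmin_inner_eq_Int_halfspaces
  by (intro convex_Int convex_INT ballI convex_halfspace_le)

lemma compact_argmin_inner: "compact K \<Longrightarrow> compact (argmin_inner K y)"
  unfolding argmin_inner_eq_Int_halfspaces
  by (intro compact_Int_closed closed_INT ballI closed_halfspace_le)

lemma argmin_inner_nonempty: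
  assumes "compact K" "K \<noteq> {}"
  shows "argmin_inner K y \<noteq> {}"
proof -
  have "continuous_on K (\<lambda>g. inner g y)"
    by (intro continuous_intros)
  with assms show ?thesis
    unfolding argmin_inner_def by (blast dest: continuous_attains_inf)
qed

lemma argmin_inner_subset_argmin_inner_convex_hull:
  "argmin_inner S y \<subseteq> argmin_inner (convex hull S) y"
proof
  fix s assume s: "s \<in> argmin_inner S y"
  have "convex hull S \<subseteq> {g. inner y s \<le> inner y g}"
    using s by (intro hull_minimal convex_halfspace_ge) (auto simp: argmin_inner_def inner_commute)
  with s show "s \<in> argmin_inner (convex hull S) y"
    by (auto simp: argmin_inner_def inner_commute hull_inc)
qed

text \<open>A convex combination attains the minimum only if every vertex carrying positive weight
  does.\<close>
lemma argmin_inner_convex_hull: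
  assumes "finite S"
  shows "argmin_inner (convex hull S) y = convex hull (argmin_inner S y)"
proof
  show "convex hull (argmin_inner S y) \<subseteq> argmin_inner (convex hull S) y"
    by (intro hull_minimal argmin_inner_subset_argmin_inner_convex_hull
        convex_argmin_inner convex_convex_hull)
next
  show "argmin_inner (convex hull S) y \<subseteq> convex hull (argmin_inner S y)"
  proof
    fix g assume g: "g \<in> argmin_inner (convex hull S) y"
    then obtain u where u: "\<forall>s\<in>S. 0 \<le> u s" "sum u S = 1" "(\<Sum>s\<in>S. u s *\<^sub>R s) = g"
      by (auto simp: argmin_inner_def convex_hull_finite[OF assms])
    have le: "inner g y \<le> inner s y" if "s \<in> S" for s
      using g that by (auto simp: argmin_inner_def hull_inc)
    have "inner g y = (\<Sum>s\<in>S. u s * inner s y)"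
      unfolding u(3)[symmetric] by (simp add: inner_sum_left)
    then have "(\<Sum>s\<in>S. u s * (inner s y - inner g y)) = 0"
      using u(2) by (simp add: right_diff_distrib sum_subtractf flip: sum_distrib_right)
    then have "\<forall>s\<in>S. u s * (inner s y - inner g y) = 0"
      using u le by (subst sum_nonneg_eq_0_iff[OF assms, symmetric]) auto
    then have weight_zero: "u s = 0" if "s \<in> S - argmin_inner S y" for s
      using that le by (force simp: argmin_inner_def)
    have "argmin_inner S y \<subseteq> S" by (rule argmin_inner_subset)
    then have "sum u (argmin_inner S y) = 1 \<and> (\<Sum>s\<in>argmin_inner S y. u s *\<^sub>R s) = g"
      using u weight_zero assms
      by (metis (no_types, lifting) scale_zero_left sum.mono_neutral_left)
    then show "g \<in> convex hull (argmin_inner S y)"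
      using u \<open>argmin_inner S y \<subseteq> S\<close> assms
      by (subst convex_hull_finite) (auto intro: finite_subset)
  qed
qed

lemma eventually_strict_order_persists:
  fixes \<phi> :: "'i \<Rightarrow> 'x \<Rightarrow> real"
  assumes "finite I" "\<And>i. i \<in> I \<Longrightarrow> (\<phi> i \<longlongrightarrow> \<phi>0 i) F"
  shows "\<forall>\<^sub>F x in F. \<forall>i\<in>I. \<forall>j\<in>I. \<phi>0 j < \<phi>0 i \<longrightarrow> \<phi> j x < \<phi> i x"
proof (intro eventually_ball_finite assms(1) ballI)
  fix i j assume "i \<in> I" "j \<in> I"
  show "\<forall>\<^sub>F x in F. \<phi>0 j < \<phi>0 i \<longrightarrow> \<phi> j x < \<phi> i x"
  proof (cases "\<phi>0 j < \<phi>0 i")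
    case True
    have "((\<lambda>x. \<phi> i x - \<phi> j x) \<longlongrightarrow> \<phi>0 i - \<phi>0 j) F"
      using \<open>i \<in> I\<close> \<open>j \<in> I\<close> by (intro tendsto_diff assms(2))
    then have "\<forall>\<^sub>F x in F. 0 < \<phi> i x - \<phi> j x"
      using True by (intro order_tendstoD(1)) auto
    then show ?thesis
      by eventually_elim simp
  qed simp
qed

text \<open>Strict inequalities between the values of the vertices persist along \<open>F\<close>, so a vertex
  that is minimal at \<open>x\<close> comes from a vertex that is minimal in the limit; the
  \<open>\<epsilon>\<close>-neighbourhood of the limiting argmin is convex, hence contains the whole argmin at \<open>x\<close>.\<close>
lemma eventually_argmin_inner_convex_hull_close:
  fixes a :: "'i \<Rightarrow> 'x \<Rightarrow> 'a::real_inner" and w :: "'x \<Rightarrow> 'a"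
  assumes I: "finite I"
    and a: "\<And>i. i \<in> I \<Longrightarrow> ((\<lambda>x. a i x) \<longlongrightarrow> a0 i) F"
    and w: "(w \<longlongrightarrow> w0) F"
    and "\<epsilon> > 0"
  shows "\<forall>\<^sub>F x in F. \<forall>g\<in>argmin_inner (convex hull ((\<lambda>i. a i x) ` I)) (w x).
           \<exists>g0\<in>argmin_inner (convex hull (a0 ` I)) w0. dist g g0 < \<epsilon>"
proof -
  let ?A0 = "argmin_inner (convex hull (a0 ` I)) w0"
  have order_kept: "\<forall>\<^sub>F x in F. \<forall>i\<in>I. \<forall>j\<in>I.
      inner (a0 j) w0 < inner (a0 i) w0 \<longrightarrow> inner (a j x) (w x) < inner (a i x) (w x)"
    using I by (intro eventually_strict_order_persists tendsto_inner a w)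
  have close: "\<forall>\<^sub>F x in F. \<forall>i\<in>I. dist (a i x) (a0 i) < \<epsilon>"
    by (intro eventually_ball_finite I ballI tendstoD a \<open>\<epsilon> > 0\<close>)
  from close order_kept show ?thesis
  proof eventually_elim
    case (elim x)
    define T where "T = (\<Union>g0\<in>?A0. \<Union>e\<in>ball 0 \<epsilon>. {g0 + e})"
    have "convex T"
      unfolding T_def by (intro convex_sums convex_argmin_inner convex_convex_hull convex_ball)
    have "argmin_inner ((\<lambda>i. a i x) ` I) (w x) \<subseteq> T"
    proof
      fix s assume s: "s \<in> argmin_inner ((\<lambda>i. a i x) ` I) (w x)"
      then obtain i where i: "i \<in> I" "s = a i x"
        unfolding argmin_inner_def by auto
      have "a0 i \<in> argmin_inner (a0 ` I) w0"
        using elim(2) s i unfolding argmin_inner_def by (force simp: not_less)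
      then have "a0 i \<in> ?A0"
        using argmin_inner_subset_argmin_inner_convex_hull by blast
      moreover have "s - a0 i \<in> ball 0 \<epsilon>"
        using elim(1) i by (simp add: dist_norm norm_minus_commute)
      ultimately show "s \<in> T"
        unfolding T_def by force
    qed
    then have "argmin_inner (convex hull ((\<lambda>i. a i x) ` I)) (w x) \<subseteq> T"
      using \<open>convex T\<close> I by (simp add: argmin_inner_convex_hull hull_minimal)
    then show ?case
      unfolding T_def by (force simp: dist_norm)
  qed
qed

lemma usc_onI_dist:
  fixes G :: "'a::topological_space \<Rightarrow> 'b::metric_space set"
  assumes compact: "\<And>x0. x0 \<in> S \<Longrightarrow> compact (G x0)"
    and close: "\<And>x0 \<epsilon>. x0 \<in> S \<Longrightarrow> \<epsilon> > 0 \<Longrightarrow>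
      \<forall>\<^sub>F x in nhds x0. x \<in> S \<longrightarrow> (\<forall>\<xi>\<in>G x. \<exists>\<xi>0\<in>G x0. dist \<xi> \<xi>0 < \<epsilon>)"
  shows "usc_on S G"
  unfolding usc_on_def
proof (intro ballI allI impI, elim conjE)
  fix x0 N assume "x0 \<in> S" "open N" "G x0 \<subseteq> N"
  then obtain \<epsilon> where "\<epsilon> > 0" and \<epsilon>: "\<And>\<xi>0. \<xi>0 \<in> G x0 \<Longrightarrow> ball \<xi>0 \<epsilon> \<subseteq> N"
    using Heine_Borel_lemma[OF compact, of x0 "{N}"] by auto
  with close[OF \<open>x0 \<in> S\<close> \<open>\<epsilon> > 0\<close>] show "\<exists>M. open M \<and> x0 \<in> M \<and> (\<forall>y\<in>M \<inter> S. G y \<subseteq> N)"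
    unfolding eventually_nhds by (fastforce simp: dist_commute)
qed

lemma compact_Cset: "compact (Cset m df u)"
  unfolding Cset_def by (intro finite_imp_compact_convex_hull finite_imageI finite_atLeastAtMost)

lemma Cset_nonempty: "m \<ge> 1 \<Longrightarrow> Cset m df u \<noteq> {}"
  unfolding Cset_def by auto

lemma Cset_subset_cball:
  assumes "\<And>i. i \<in> {1..m} \<Longrightarrow> norm (df i u) \<le> R"
  shows "Cset m df u \<subseteq> cball 0 R"
  unfolding Cset_def using assms by (intro hull_minimal convex_cball) auto

lemma Gmap_eq:
  "Gmap m df \<alpha> (t, u, v) = {v} \<times> (\<lambda>g. - (\<alpha> / t) *\<^sub>R v - g) ` argmin_inner (Cset m df u) (- v)"
  unfolding Gmap_def by auto

lemma compact_Gmap: "compact (Gmap m df \<alpha> (t, u, v))"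
  unfolding Gmap_eq
  by (intro compact_Times compact_sing compact_continuous_image continuous_intros
      compact_argmin_inner compact_Cset)

lemma convex_Gmap: "convex (Gmap m df \<alpha> (t, u, v))"
proof -
  have "(\<lambda>g. - (\<alpha> / t) *\<^sub>R v - g) ` A = (+) (- (\<alpha> / t) *\<^sub>R v) ` (uminus ` A)" for A :: "'a set"
    unfolding image_image by (rule image_cong) auto
  then show ?thesis
    unfolding Gmap_eq Cset_def
    by (simp add: convex_Times convex_translation convex_negations convex_argmin_inner)
qed

lemma Gmap_nonempty: "m \<ge> 1 \<Longrightarrow> Gmap m df \<alpha> (t, u, v) \<noteq> {}"
  unfolding Gmap_eq
  by (simp add: argmin_inner_nonempty compact_Cset Cset_nonempty)

lemma norm_Gmap_le:
  assumes "0 < t0" "t0 \<le> t" "0 \<le> \<alpha>"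
    and "\<And>i. i \<in> {1..m} \<Longrightarrow> norm (df i u) \<le> R"
    and "\<xi> \<in> Gmap m df \<alpha> (t, u, v)"
  shows "norm \<xi> \<le> (1 + \<alpha> / t0) * norm v + R"
proof -
  obtain g where g: "g \<in> Cset m df u" "\<xi> = (v, - (\<alpha> / t) *\<^sub>R v - g)"
    using assms(5) argmin_inner_subset unfolding Gmap_eq by blast
  have "Cset m df u \<subseteq> cball 0 R"
    by (rule Cset_subset_cball) (rule assms(4))
  with g(1) have "norm g \<le> R"
    by auto
  have "\<alpha> / t \<le> \<alpha> / t0"
    using assms(1-3) by (intro divide_left_mono) auto
  have "norm \<xi> \<le> norm v + norm (- (\<alpha> / t) *\<^sub>R v - g)"
    unfolding g(2) by (rule norm_Pair_le)
  also have "\<dots> \<le> norm v + ((\<alpha> / t) * norm v + norm g)"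
    using assms(1-3) norm_triangle_ineq4[of "- (\<alpha> / t) *\<^sub>R v" g] by simp
  also have "\<dots> \<le> norm v + ((\<alpha> / t0) * norm v + R)"
    using \<open>\<alpha> / t \<le> \<alpha> / t0\<close> \<open>norm g \<le> R\<close> by (intro add_mono mult_right_mono) auto
  finally show ?thesis
    by (simp add: algebra_simps)
qed

lemma Gmap_close_if_close:
  fixes df :: "nat \<Rightarrow> 'a::real_inner \<Rightarrow> 'a"
  assumes "dist (v, - (\<alpha> / t) *\<^sub>R v) (v0, - (\<alpha> / s0) *\<^sub>R v0) < \<epsilon> / 2"
    and "\<forall>g\<in>argmin_inner (Cset m df u) (- v).
      \<exists>g0\<in>argmin_inner (Cset m df u0) (- v0). dist g g0 < \<epsilon> / 2"
    and "\<xi> \<in> Gmap m df \<alpha> (t, u, v)"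
  shows "\<exists>\<xi>0\<in>Gmap m df \<alpha> (s0, u0, v0). dist \<xi> \<xi>0 < \<epsilon>"
proof -
  have G_shift: "Gmap m df \<alpha> (t, u, v) =
      (\<lambda>g. (v, - (\<alpha> / t) *\<^sub>R v) + (0, - g)) ` argmin_inner (Cset m df u) (- v)" for t u v
    unfolding Gmap_def by auto
  obtain g where g: "g \<in> argmin_inner (Cset m df u) (- v)" "\<xi> = (v, - (\<alpha> / t) *\<^sub>R v) + (0, - g)"
    using assms(3) unfolding G_shift by blast
  then obtain g0 where g0: "g0 \<in> argmin_inner (Cset m df u0) (- v0)" "dist g g0 < \<epsilon> / 2"
    using assms(2) by blast
  have "dist \<xi> ((v0, - (\<alpha> / s0) *\<^sub>R v0) + (0, - g0))
      \<le> dist (v, - (\<alpha> / t) *\<^sub>R v) (v0, - (\<alpha> / s0) *\<^sub>R v0) + dist (0::'a, - g) (0, - g0)"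
    unfolding g(2) by (rule dist_triangle_add)
  also have "\<dots> < \<epsilon>"
    using assms(1) g0(2) by (simp add: dist_Pair_Pair dist_minus)
  finally show ?thesis
    using g0(1) unfolding G_shift by blast
qed

lemma usc_on_Gmap:
  fixes df :: "nat \<Rightarrow> 'a::real_inner \<Rightarrow> 'a"
  assumes "t0 > 0" and cont: "\<And>i. i \<in> {1..m} \<Longrightarrow> continuous_on UNIV (df i)"
  shows "usc_on ({t0..} \<times> UNIV \<times> UNIV) (Gmap m df \<alpha>)"
proof (rule usc_onI_dist)
  fix x0 :: "real \<times> 'a \<times> 'a" and \<epsilon> :: real
  assume "x0 \<in> {t0..} \<times> UNIV \<times> UNIV" "\<epsilon> > 0"
  then obtain s0 u0 v0 where x0: "x0 = (s0, u0, v0)" "s0 \<noteq> 0"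
    using \<open>t0 > 0\<close> by (cases x0) auto
  have "((\<lambda>x. x) \<longlongrightarrow> (s0, u0, v0)) (nhds x0)"
    unfolding x0 by (rule filterlim_ident)
  then have t_lim: "(fst \<longlongrightarrow> s0) (nhds x0)"
    and u_lim: "((\<lambda>x. fst (snd x)) \<longlongrightarrow> u0) (nhds x0)"
    and v_lim: "((\<lambda>x. snd (snd x)) \<longlongrightarrow> v0) (nhds x0)"
    using tendsto_fst tendsto_fst[OF tendsto_snd] tendsto_snd[OF tendsto_snd] by fastforce+
  have "((\<lambda>x. (snd (snd x), - (\<alpha> / fst x) *\<^sub>R snd (snd x)))
      \<longlongrightarrow> (v0, - (\<alpha> / s0) *\<^sub>R v0)) (nhds x0)"
    using x0(2) by (intro tendsto_intros t_lim v_lim)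
  then have affine_close: "\<forall>\<^sub>F x in nhds x0.
      dist (snd (snd x), - (\<alpha> / fst x) *\<^sub>R snd (snd x)) (v0, - (\<alpha> / s0) *\<^sub>R v0) < \<epsilon> / 2"
    using \<open>\<epsilon> > 0\<close> by (intro tendstoD) auto
  have "((\<lambda>x. df i (fst (snd x))) \<longlongrightarrow> df i u0) (nhds x0)" if "i \<in> {1..m}" for i
    using continuous_on_tendsto_compose[OF cont[OF that] u_lim] by simp
  then have argmin_close: "\<forall>\<^sub>F x in nhds x0.
      \<forall>g\<in>argmin_inner (Cset m df (fst (snd x))) (- snd (snd x)).
        \<exists>g0\<in>argmin_inner (Cset m df u0) (- v0). dist g g0 < \<epsilon> / 2"
    unfolding Cset_def using \<open>\<epsilon> > 0\<close> v_lim
    by (intro eventually_argmin_inner_convex_hull_close tendsto_intros) auto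
  from affine_close argmin_close show "\<forall>\<^sub>F x in nhds x0. x \<in> {t0..} \<times> UNIV \<times> UNIV \<longrightarrow>
      (\<forall>\<xi>\<in>Gmap m df \<alpha> x. \<exists>\<xi>0\<in>Gmap m df \<alpha> x0. dist \<xi> \<xi>0 < \<epsilon>)"
    unfolding x0(1)
  proof eventually_elim
    case (elim x)
    obtain t u v where x: "x = (t, u, v)"
      by (cases x)
    show ?case
      using elim unfolding x fst_conv snd_conv by (blast intro: Gmap_close_if_close)
  qed
qed (metis compact_Gmap prod_cases3)

lemma orthonormal_basis_of_finite_span:
  fixes B :: "'a::real_inner set"
  assumes "finite B"
  obtains U where "finite U" "pairwise orthogonal U" "\<And>i. i \<in> U \<Longrightarrow> norm i = 1"
    "span U = span B"
proof -
  obtain C where C: "finite C" "span C = span B" "pairwise orthogonal C"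
    using basis_orthogonal[OF assms] by blast
  define U where "U = (\<lambda>b. b /\<^sub>R norm b) ` (C - {0})"
  show ?thesis
  proof (rule that)
    show "finite U"
      using C(1) by (simp add: U_def)
    show "pairwise orthogonal U"
      using C(3) unfolding U_def pairwise_def orthogonal_def by auto
    show "norm i = 1" if "i \<in> U" for i
      using that unfolding U_def by (auto simp: field_simps split: if_splits)
    have "U \<subseteq> span C"
      unfolding U_def by (auto intro: span_mul span_base)
    moreover have "C - {0} \<subseteq> span U"
    proof
      fix b assume "b \<in> C - {0}"
      then have "b = norm b *\<^sub>R (b /\<^sub>R norm b)" and "b /\<^sub>R norm b \<in> U"
        unfolding U_def by auto
      then show "b \<in> span U"
        by (metis span_base span_mul)
    qed
    ultimately show "span U = span B"
      by (metis C(2) span_delete_0 span_eq)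
  qed
qed

text \<open>The coordinates of \<open>x\<close> in an orthonormal basis \<open>e\<^sub>1, \<dots>, e\<^sub>n\<close> are bounded by \<open>\<parallel>x\<parallel>\<close>, so
  \<open>x\<close> is the average of points on the segments \<open>[-r n e\<^sub>i, r n e\<^sub>i]\<close>.\<close>
lemma cball_subset_convex_hull_orthonormal_basis:
  fixes U :: "'a::real_inner set" and r :: real
  assumes U: "finite U" "pairwise orthogonal U" "\<And>i. i \<in> U \<Longrightarrow> norm i = 1" "span U = UNIV"
  defines "R \<equiv> r * card U"
  shows "cball 0 r \<subseteq> convex hull (insert 0 ((\<lambda>i. R *\<^sub>R i) ` U \<union> (\<lambda>i. (- R) *\<^sub>R i) ` U))"
    (is "_ \<subseteq> convex hull ?P")
proof
  fix x :: 'a assume "x \<in> cball 0 r"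
  have expand: "(\<Sum>i\<in>U. (x \<bullet> i) *\<^sub>R i) = x"
    using orthonormal_basis_expand[OF U(2,3)] U(1,4) by simp
  show "x \<in> convex hull ?P"
  proof (cases "U = {}")
    case True
    with expand have "x = 0"
      by simp
    then show ?thesis
      by (simp add: hull_inc)
  next
    case False
    have coord: "(card U * (x \<bullet> i)) *\<^sub>R i \<in> convex hull ?P" if "i \<in> U" for i
    proof -
      have "\<bar>x \<bullet> i\<bar> \<le> r"
        using Cauchy_Schwarz_ineq2[of x i] U(3)[OF that] \<open>x \<in> cball 0 r\<close> by simp
      then have "\<bar>card U * (x \<bullet> i)\<bar> \<le> R"
        unfolding R_def abs_mult by (simp add: mult_left_mono mult.commute[of r])
      then have "card U * (x \<bullet> i) \<in> closed_segment (- R) R"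
        by (auto simp: closed_segment_eq_real_ivl abs_le_iff)
      then have "(card U * (x \<bullet> i)) *\<^sub>R i \<in> closed_segment ((- R) *\<^sub>R i) (R *\<^sub>R i)"
        unfolding closed_segment_linear_image[OF linear_scaleR_left] by blast
      also have "\<dots> = convex hull {(- R) *\<^sub>R i, R *\<^sub>R i}"
        by (rule segment_convex_hull)
      also have "\<dots> \<subseteq> convex hull ?P"
        using that by (intro hull_mono) auto
      finally show ?thesis .
    qed
    have "(\<Sum>i\<in>U. (1 / card U) *\<^sub>R ((card U * (x \<bullet> i)) *\<^sub>R i)) \<in> convex hull ?P"
      using U(1) False coord by (intro convex_sum convex_convex_hull) auto
    with expand False U(1) show ?thesis
      by simp
  qed
qed

lemma compact_cball_if_finite_span:
  fixes B :: "'a::real_inner set"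
  assumes "finite B" "span B = UNIV"
  shows "compact (cball (0::'a) r)"
proof -
  obtain U :: "'a set" where U: "finite U" "pairwise orthogonal U" "\<And>i. i \<in> U \<Longrightarrow> norm i = 1"
    "span U = UNIV"
    using orthonormal_basis_of_finite_span[OF assms(1)] unfolding assms(2) by blast
  let ?P = "insert 0 ((\<lambda>i. (r * card U) *\<^sub>R i) ` U \<union> (\<lambda>i. (- (r * card U)) *\<^sub>R i) ` U)"
  have "compact (convex hull ?P \<inter> cball 0 r)"
    using U(1) by (intro compact_Int_closed closed_cball finite_imp_compact_convex_hull) auto
  with cball_subset_convex_hull_orthonormal_basis[OF U] show ?thesis
    by (simp add: Int_absorb1)
qed

lemma proj_mem:
  fixes K :: "'a::real_normed_vector set"
  assumes "compact K" "K \<noteq> {}"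
  shows "proj K y \<in> K"
proof -
  have "continuous_on K (\<lambda>w. (norm (w - y))\<^sup>2)"
    by (intro continuous_intros)
  then have "\<exists>w. w \<in> K \<and> (\<forall>w'\<in>K. (norm (w - y))\<^sup>2 \<le> (norm (w' - y))\<^sup>2)"
    using continuous_attains_inf[OF assms] by blast
  then show ?thesis
    unfolding proj_def by (rule someI2_ex) blast
qed

lemma eventually_norm_bounded_finite:
  assumes "finite I" "\<And>i. i \<in> I \<Longrightarrow> (f i \<longlongrightarrow> l i) F"
  obtains R where "\<forall>\<^sub>F x in F. \<forall>i\<in>I. norm (f i x) < R"
proof
  show "\<forall>\<^sub>F x in F. \<forall>i\<in>I. norm (f i x) < (\<Sum>i\<in>I. norm (l i)) + 1"
  proof (intro eventually_ball_finite assms(1) ballI)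
    fix i assume "i \<in> I"
    then have "norm (l i) < (\<Sum>i\<in>I. norm (l i)) + 1"
      using member_le_sum[of i I "\<lambda>i. norm (l i)"] assms(1) by simp
    then show "\<forall>\<^sub>F x in F. norm (f i x) < (\<Sum>i\<in>I. norm (l i)) + 1"
      using order_tendstoD(2)[OF tendsto_norm[OF assms(2)[OF \<open>i \<in> I\<close>]]] by blast
  qed
qed

lemma Gmap_locally_bounded:
  fixes df :: "nat \<Rightarrow> 'a::real_inner \<Rightarrow> 'a" and p :: "real \<times> 'a \<times> 'a"
  assumes "t0 > 0" "\<alpha> \<ge> 0"
    and cont: "\<And>i. i \<in> {1..m} \<Longrightarrow> continuous_on UNIV (df i)"
  obtains r where "\<forall>\<^sub>F x in nhds p. fst x \<ge> t0 \<longrightarrow> (\<forall>\<xi>\<in>Gmap m df \<alpha> x. norm \<xi> \<le> r)"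
proof -
  obtain s0 u0 v0 where p: "p = (s0, u0, v0)"
    by (cases p)
  have "((\<lambda>x. x) \<longlongrightarrow> (s0, u0, v0)) (nhds p)"
    unfolding p by (rule filterlim_ident)
  then have u_lim: "((\<lambda>x. fst (snd x)) \<longlongrightarrow> u0) (nhds p)"
    and v_lim: "((\<lambda>x. snd (snd x)) \<longlongrightarrow> v0) (nhds p)"
    using tendsto_fst[OF tendsto_snd] tendsto_snd[OF tendsto_snd] by fastforce+
  have "((\<lambda>x. df i (fst (snd x))) \<longlongrightarrow> df i u0) (nhds p)" if "i \<in> {1..m}" for i
    using continuous_on_tendsto_compose[OF cont[OF that] u_lim] by simp
  then obtain R where "\<forall>\<^sub>F x in nhds p. \<forall>i\<in>{1..m}. norm (df i (fst (snd x))) < R"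
    by (rule eventually_norm_bounded_finite[OF finite_atLeastAtMost])
  moreover have "\<forall>\<^sub>F x in nhds p. norm (snd (snd x)) < norm v0 + 1"
    using order_tendstoD(2)[OF tendsto_norm[OF v_lim]] by simp
  ultimately have "\<forall>\<^sub>F x in nhds p. fst x \<ge> t0 \<longrightarrow>
      (\<forall>\<xi>\<in>Gmap m df \<alpha> x. norm \<xi> \<le> (1 + \<alpha> / t0) * (norm v0 + 1) + R)"
  proof eventually_elim
    case (elim x)
    obtain t u v where x: "x = (t, u, v)"
      by (cases x)
    show ?case
    proof (intro impI ballI)
      fix \<xi> assume "fst x \<ge> t0" "\<xi> \<in> Gmap m df \<alpha> x"
      with elim assms(1,2) have "norm \<xi> \<le> (1 + \<alpha> / t0) * norm v + R"
        unfolding x by (intro norm_Gmap_le) (auto simp: less_imp_le)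
      also have "\<dots> \<le> (1 + \<alpha> / t0) * (norm v0 + 1) + R"
        using elim assms(1,2) unfolding x by (intro add_right_mono mult_left_mono) auto
      finally show "norm \<xi> \<le> (1 + \<alpha> / t0) * (norm v0 + 1) + R" .
    qed
  qed
  then show thesis
    by (rule that)
qed

lemma locally_compact_map_proj_Gmap:
  fixes df :: "nat \<Rightarrow> 'a::real_inner \<Rightarrow> 'a" and B :: "'a set"
  assumes "finite B" "span B = UNIV" "m \<ge> 1" "t0 > 0" "\<alpha> \<ge> 0"
    and cont: "\<And>i. i \<in> {1..m} \<Longrightarrow> continuous_on UNIV (df i)"
  shows "locally_compact_map ({t0..} \<times> UNIV \<times> UNIV) (\<lambda>x. proj (Gmap m df \<alpha> x) 0)"
  unfolding locally_compact_map_def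
proof
  fix x0 :: "real \<times> 'a \<times> 'a"
  obtain r where "\<forall>\<^sub>F x in nhds x0. fst x \<ge> t0 \<longrightarrow> (\<forall>\<xi>\<in>Gmap m df \<alpha> x. norm \<xi> \<le> r)"
    using Gmap_locally_bounded[where m = m and df = df and p = x0, OF assms(4,5) cont] by blast
  then obtain M where M: "open M" "x0 \<in> M"
    and bounded: "\<And>x \<xi>. x \<in> M \<Longrightarrow> fst x \<ge> t0 \<Longrightarrow> \<xi> \<in> Gmap m df \<alpha> x \<Longrightarrow> norm \<xi> \<le> r"
    unfolding eventually_nhds by blast
  have "proj (Gmap m df \<alpha> x) 0 \<in> cball 0 r \<times> cball 0 r" if "x \<in> M \<inter> {t0..} \<times> UNIV \<times> UNIV" for x
  proof -
    let ?p = "proj (Gmap m df \<alpha> x) 0"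
    obtain t u v where x: "x = (t, u, v)"
      by (cases x)
    have "?p \<in> Gmap m df \<alpha> x"
      unfolding x by (intro proj_mem compact_Gmap Gmap_nonempty \<open>m \<ge> 1\<close>)
    with that bounded[of x ?p] have "norm ?p \<le> r"
      unfolding x by simp
    then show ?thesis
      using norm_fst_le[of "fst ?p" "snd ?p"] norm_snd_le[of "snd ?p" "fst ?p"]
      by (simp add: mem_Times_iff)
  qed
  then show "\<exists>M K. open M \<and> x0 \<in> M \<and> compact K \<and>
      (\<lambda>x. proj (Gmap m df \<alpha> x) 0) ` (M \<inter> {t0..} \<times> UNIV \<times> UNIV) \<subseteq> K"
    by (intro exI[of _ M] exI[of _ "cball 0 r \<times> cball 0 r"] conjI M image_subsetI
        compact_Times compact_cball_if_finite_span[OF assms(1,2)])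
qed

lemma norm_le_if_lipschitz:
  fixes f :: "'a::real_normed_vector \<Rightarrow> 'b::real_normed_vector"
  assumes "\<forall>x y. norm (f x - f y) \<le> L * norm (x - y)"
  shows "norm (f u) \<le> norm (f 0) + \<bar>L\<bar> * norm u"
proof -
  have "norm (f u) \<le> norm (f 0) + norm (f u - f 0)"
    by (rule norm_triangle_sub)
  also have "\<dots> \<le> norm (f 0) + \<bar>L\<bar> * norm u"
    using assms[rule_format, of u 0] abs_ge_self[of L] mult_right_mono[OF _ norm_ge_zero, of L "\<bar>L\<bar>" u]
    by simp
  finally show ?thesis .
qed

lemma Gmap_linear_growth:
  fixes df :: "nat \<Rightarrow> 'a::real_inner \<Rightarrow> 'a"
  assumes "t0 > 0" "\<alpha> \<ge> 0"
    and lipschitz: "\<forall>i\<in>{1..m}. \<forall>x y. norm (df i x - df i y) \<le> L * norm (x - y)"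
  shows "\<exists>c>0. \<forall>t u v. t \<ge> t0 \<longrightarrow> (\<forall>\<xi>\<in>Gmap m df \<alpha> (t, u, v). norm \<xi> \<le> c * (1 + norm (u, v)))"
proof -
  define M0 where "M0 = (\<Sum>i\<in>{1..m}. norm (df i 0))"
  define c where "c = 1 + \<alpha> / t0 + \<bar>L\<bar> + M0"
  have "M0 \<ge> 0" "\<alpha> / t0 \<ge> 0"
    using assms(1,2) by (simp_all add: M0_def sum_nonneg)
  have "norm \<xi> \<le> c * (1 + norm (u, v))" if "t \<ge> t0" "\<xi> \<in> Gmap m df \<alpha> (t, u, v)" for t u v \<xi>
  proof -
    have "norm (df i u) \<le> M0 + \<bar>L\<bar> * norm u" if "i \<in> {1..m}" for i
    proof -
      have "norm (df i 0) \<le> M0"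
        unfolding M0_def using that by (intro member_le_sum) auto
      with norm_le_if_lipschitz[of "df i" L u] lipschitz that show ?thesis
        by simp
    qed
    then have "norm \<xi> \<le> (1 + \<alpha> / t0) * norm v + (M0 + \<bar>L\<bar> * norm u)"
      using that assms(1,2) by (intro norm_Gmap_le) auto
    also have "\<dots> \<le> (1 + \<alpha> / t0) * norm (u, v) + (M0 + \<bar>L\<bar> * norm (u, v))"
      using \<open>\<alpha> / t0 \<ge> 0\<close> by (intro add_mono mult_left_mono norm_snd_le norm_fst_le order_refl) auto
    also have "\<dots> \<le> c * (1 + norm (u, v))"
      using \<open>\<alpha> / t0 \<ge> 0\<close> mult_nonneg_nonneg[OF \<open>M0 \<ge> 0\<close> norm_ge_zero[of "(u, v)"]]
      unfolding c_def by (simp add: algebra_simps)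
    finally show ?thesis .
  qed
  moreover have "c > 0"
    using \<open>M0 \<ge> 0\<close> \<open>\<alpha> / t0 \<ge> 0\<close> unfolding c_def by simp
  ultimately show ?thesis
    by blast
qed

theorem proposition3p1:
  fixes f :: "nat \<Rightarrow> 'a::{real_inner, complete_space} \<Rightarrow> real"
    and df :: "nat \<Rightarrow> 'a \<Rightarrow> 'a"
    and m :: nat and \<alpha> t0 :: real
  assumes m_pos: "m \<ge> 1"
    and convex: "\<And>i. i \<in> {1..m} \<Longrightarrow> convex_on UNIV (f i)"
    and grad: "\<And>i u. i \<in> {1..m} \<Longrightarrow> (f i has_derivative (\<lambda>h. inner (df i u) h)) (at u)"
    and grad_cont: "\<And>i. i \<in> {1..m} \<Longrightarrow> continuous_on UNIV (df i)"
    and alpha_pos: "\<alpha> > 0" and t0_pos: "t0 > 0"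
  shows "(\<forall>t u v. t \<ge> t0 \<longrightarrow> convex (Gmap m df \<alpha> (t, u, v)) \<and> compact (Gmap m df \<alpha> (t, u, v)))
    \<and> usc_on ({t0..} \<times> UNIV \<times> UNIV) (Gmap m df \<alpha>)
    \<and> ((\<exists>B :: 'a set. finite B \<and> span B = UNIV) \<longrightarrow>
         locally_compact_map ({t0..} \<times> UNIV \<times> UNIV) (\<lambda>x. proj (Gmap m df \<alpha> x) 0))
    \<and> (\<forall>L. (\<forall>i\<in>{1..m}. \<forall>x y. norm (df i x - df i y) \<le> L * norm (x - y)) \<longrightarrow>
         (\<exists>c>0. \<forall>t u v. t \<ge> t0 \<longrightarrow>
            (\<forall>\<xi>\<in>Gmap m df \<alpha> (t, u, v). norm \<xi> \<le> c * (1 + norm (u, v)))))"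
proof (intro conjI allI impI)
  fix t u v
  show "convex (Gmap m df \<alpha> (t, u, v))" "compact (Gmap m df \<alpha> (t, u, v))"
    by (rule convex_Gmap compact_Gmap)+
next
  show "usc_on ({t0..} \<times> UNIV \<times> UNIV) (Gmap m df \<alpha>)"
    using t0_pos grad_cont by (rule usc_on_Gmap)
next
  assume "\<exists>B :: 'a set. finite B \<and> span B = UNIV"
  then obtain B :: "'a set" where "finite B" "span B = UNIV"
    by blast
  then show "locally_compact_map ({t0..} \<times> UNIV \<times> UNIV) (\<lambda>x. proj (Gmap m df \<alpha> x) 0)"
    using m_pos t0_pos alpha_pos grad_cont
    by (intro locally_compact_map_proj_Gmap[of B m t0 \<alpha> df]) auto
next
  fix L
  assume "\<forall>i\<in>{1..m}. \<forall>x y. norm (df i x - df i y) \<le> L * norm (x - y)"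
  then show "\<exists>c>0. \<forall>t u v. t \<ge> t0 \<longrightarrow>
      (\<forall>\<xi>\<in>Gmap m df \<alpha> (t, u, v). norm \<xi> \<le> c * (1 + norm (u, v)))"
    using t0_pos alpha_pos by (intro Gmap_linear_growth) auto
qed

end
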